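(* Let $C_n$ denote the $n$th Catalan number, with $C_0=C_1=1$. Then for every integer $n>1$, $$C_n=\sum_{j\ge 1}(-1)^{j-1}\,C_{n-j}\binom{n-j+1}{j},$$ where the sum runs over $1\le j\le n$.
   Context: $C_n=\frac{1}{n+1}\binom{2n}{n}$. Convention: $\binom{a}{b}=0$ if $b<0$ or $b>a$. *)

theory Defs
  imports Main
begin

definition catalan :: "nat \<Rightarrow> nat" where
  "catalan n = (2 * n choose n) div (n + 1)"

end

(*
  Let C(x) be the generating function of the Catalan numbers, so C = 1 + x C^2 (a consequence
  of the binomial series 1 - 2 x C(x) = sqrt (1 - 4 x)). Then D(x) = C(x (1 - x)) satisfies
  D = 1 + x (1 - x) D^2, and G = (1 - x) D satisfies G = (1 - x) + x G^2, that is
  (G - 1) (1 - x (G + 1)) = 0. The second factor has constant term 1, so G = 1 and every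
  coefficient of D = 1/(1 - x) equals 1:
    sum_i (-1)^(m-i) C_i binom(i, m-i) = 1   for all m.
  Subtracting this identity for m = n - 1 from the one for m = n and applying Pascal's rule
  isolates C_n and gives the recurrence.
*)
theory Submission
  imports Defs "HOL-Computational_Algebra.Formal_Power_Series"
begin

unbundle fps_syntax

lemma Suc_dvd_central_binomial: "Suc n dvd (2 * n choose n)"
proof -
  have "Suc n * (2 * n choose Suc n) = 2 * n * (2 * n - 1 choose n)"
    by (rule binomial_absorption)
  also have "\<dots> = (2 * n - n) * (2 * n choose n)"
    by (rule binomial_absorb_comp[symmetric])
  also have "2 * n - n = n"
    by simp
  finally have "Suc n dvd n * (2 * n choose n)"
    by (metis dvd_triv_left)
  then have "Suc n dvd Suc n * (2 * n choose n) - n * (2 * n choose n)"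
    by (rule dvd_diff_nat[OF dvd_triv_left])
  then show ?thesis
    by (simp add: diff_mult_distrib)
qed

lemma catalan_mult_Suc: "catalan n * Suc n = 2 * n choose n"
  unfolding catalan_def using dvd_div_mult_self[OF Suc_dvd_central_binomial] by simp

lemma central_binomial_Suc: "Suc n * (2 * Suc n choose Suc n) = 2 * (2 * n + 1) * (2 * n choose n)"
proof -
  have step_odd: "Suc n * (2 * Suc n choose Suc n) = 2 * Suc n * (2 * n + 1 choose n)"
    using Suc_times_binomial[of n "2 * n + 1"] by simp
  have step_even: "Suc n * (2 * n + 1 choose n) = (2 * n + 1) * (2 * n choose n)"
    using Suc_times_binomial[of n "2 * n"] binomial_symmetric[of n "2 * n + 1"] by simp
  have "Suc n * (Suc n * (2 * Suc n choose Suc n)) = 2 * Suc n * (Suc n * (2 * n + 1 choose n))"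
    by (subst step_odd) (rule mult.left_commute)
  also have "\<dots> = Suc n * (2 * (2 * n + 1) * (2 * n choose n))"
    unfolding step_even by (simp add: mult_ac)
  finally show ?thesis
    by (rule mult_left_cancel[THEN iffD1, rotated]) simp
qed

lemma catalan_Suc: "catalan (Suc n) * (n + 2) = 2 * (2 * n + 1) * catalan n"
proof -
  have "Suc n * (catalan (Suc n) * (n + 2)) = Suc n * (2 * Suc n choose Suc n)"
    using catalan_mult_Suc[of "Suc n"] by simp
  also have "\<dots> = Suc n * (2 * (2 * n + 1) * catalan n)"
    unfolding central_binomial_Suc catalan_mult_Suc[of n, symmetric] by (simp only: mult_ac)
  finally show ?thesis
    by (rule mult_left_cancel[THEN iffD1, rotated]) simp
qed

lemma gbinomial_half_catalan:
  "((1/2::real) gchoose Suc n) * (-4) ^ Suc n = - 2 * real (catalan n)"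
proof (induction n)
  case 0
  show ?case
    by (simp add: catalan_def)
next
  case (Suc n)
  have recurrence: "of_nat (Suc (Suc n)) * ((1/2::real) gchoose Suc (Suc n))
      = (1/2 - of_nat (Suc n)) * (1/2 gchoose Suc n)"
    by (simp only: gbinomial_absorption gbinomial_absorb_comp)
  have "real (n + 2) * (((1/2::real) gchoose Suc (Suc n)) * (-4) ^ Suc (Suc n))
      = (-4) * (-4) ^ Suc n * (of_nat (Suc (Suc n)) * (1/2 gchoose Suc (Suc n)))"
    by (simp add: mult_ac)
  also have "\<dots> = 2 * (2 * n + 1) * (((1/2::real) gchoose Suc n) * (-4) ^ Suc n)"
    unfolding recurrence by (simp add: algebra_simps)
  also have "\<dots> = - 2 * real (2 * (2 * n + 1) * catalan n)"
    unfolding Suc.IH by (simp add: algebra_simps)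
  also have "\<dots> = real (n + 2) * (- 2 * real (catalan (Suc n)))"
    unfolding catalan_Suc[symmetric] by (simp add: algebra_simps)
  finally show ?case
    by (rule mult_left_cancel[THEN iffD1, rotated]) simp
qed

definition catalan_fps :: "real fps" where
  "catalan_fps = Abs_fps (\<lambda>n. real (catalan n))"

lemma fps_binomial_half_compose_linear_squared:
  fixes c :: "'a::field_char_0"
  shows "(fps_binomial (1/2) oo (fps_const c * fps_X)) ^ 2 = 1 + fps_const c * fps_X"
proof -
  have "(fps_binomial (1/2) oo (fps_const c * fps_X)) ^ 2
      = fps_binomial (1/2) ^ 2 oo (fps_const c * fps_X)"
    by (rule fps_compose_power) simp
  also have "fps_binomial (1/2 :: 'a) ^ 2 = 1 + fps_X"
    by (simp add: fps_binomial_power fps_binomial_1)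
  finally show ?thesis
    by (simp add: fps_compose_add_distrib)
qed

lemma one_minus_2X_catalan_fps_eq_binomial_half:
  "1 - 2 * fps_X * catalan_fps = fps_binomial (1/2) oo (fps_const (-4) * fps_X)"
proof (rule fps_ext)
  fix n
  show "(1 - 2 * fps_X * catalan_fps) $ n = (fps_binomial (1/2) oo (fps_const (-4) * fps_X)) $ n"
    using gbinomial_half_catalan[of "n - 1"]
    by (cases n) (simp_all add: catalan_fps_def numeral_fps_const mult.assoc)
qed

lemma catalan_fps_functional_equation: "catalan_fps = 1 + fps_X * catalan_fps ^ 2"
proof -
  have "(1 - 2 * fps_X * catalan_fps) ^ 2 = 1 - 4 * fps_X"
    unfolding one_minus_2X_catalan_fps_eq_binomial_half fps_binomial_half_compose_linear_squared
    by (simp add: numeral_fps_const flip: fps_const_neg)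
  then have "4 * fps_X * (1 + fps_X * catalan_fps ^ 2 - catalan_fps) = 0"
    by (simp add: algebra_simps power2_eq_square)
  then show ?thesis
    by simp
qed

lemma fps_nth_one_minus_X_power:
  "(1 - fps_X :: 'a::comm_ring_1 fps) ^ i $ k = (-1) ^ k * of_nat (i choose k)"
proof (induction i arbitrary: k)
  case 0
  show ?case
    by (cases k) simp_all
next
  case (Suc i)
  show ?case
  proof (cases k)
    case 0
    then show ?thesis
      using Suc.IH[of 0] by simp
  next
    case (Suc j)
    then show ?thesis
      using Suc.IH[of j] Suc.IH[of "Suc j"] by (simp add: algebra_simps)
  qed
qed

lemma fps_nth_compose_X_mult_one_minus_X:
  fixes F :: "'a::comm_ring_1 fps"
  shows "(F oo (fps_X * (1 - fps_X))) $ m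
    = (\<Sum>i\<le>m. F $ i * ((-1) ^ (m - i) * of_nat (i choose (m - i))))"
  unfolding fps_compose_nth atMost_atLeast0
proof (rule sum.cong[OF refl])
  fix i
  assume "i \<in> {0..m}"
  then show "F $ i * (fps_X * (1 - fps_X)) ^ i $ m
      = F $ i * ((-1) ^ (m - i) * of_nat (i choose (m - i)))"
    by (simp add: power_mult_distrib fps_X_power_mult_nth fps_nth_one_minus_X_power)
qed

lemma quadratic_fps_compose_X_mult_one_minus_X:
  fixes C :: "'a::idom fps"
  assumes C: "C = 1 + fps_X * C ^ 2"
  shows "(1 - fps_X) * (C oo (fps_X * (1 - fps_X))) = 1"
proof -
  define Y :: "'a fps" where "Y = fps_X * (1 - fps_X)"
  define G where "G = (1 - fps_X) * (C oo Y)"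
  have Y0: "Y $ 0 = 0"
    by (simp add: Y_def)
  have "C oo Y = 1 + Y * (C oo Y) ^ 2"
    by (subst C) (simp add: Y0 fps_compose_add_distrib fps_compose_mult_distrib fps_compose_power)
  then have "G = (1 - fps_X) * (1 + Y * (C oo Y) ^ 2)"
    by (simp add: G_def)
  also have "\<dots> = (1 - fps_X) + fps_X * G ^ 2"
    by (simp add: G_def Y_def power2_eq_square algebra_simps)
  finally have "G = (1 - fps_X) + fps_X * G ^ 2" .
  then have "(G - 1) * (1 - fps_X * (G + 1)) = 0"
    by (simp add: algebra_simps power2_eq_square)
  moreover have "(1 - fps_X * (G + 1)) $ 0 \<noteq> 0"
    by simp
  ultimately have "G = 1"
    by (metis eq_iff_diff_eq_0 mult_eq_0_iff fps_zero_nth)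
  then show ?thesis
    by (simp add: G_def Y_def)
qed

lemma fps_nth_eq_1_if_one_minus_X_mult_eq_1:
  fixes D :: "'a::comm_ring_1 fps"
  assumes "(1 - fps_X) * D = 1"
  shows "D $ m = 1"
proof (induction m)
  case 0
  show ?case
    using arg_cong[OF assms, of "\<lambda>F. F $ 0"] by simp
next
  case (Suc m)
  show ?case
    using arg_cong[OF assms, of "\<lambda>F. F $ Suc m"] Suc.IH by (simp add: algebra_simps)
qed

lemma catalan_alternating_sum_eq_1:
  "(\<Sum>i\<le>m. (-1) ^ (m - i) * int (catalan i) * int (i choose (m - i))) = 1"
proof -
  have "(catalan_fps oo (fps_X * (1 - fps_X))) $ m = 1"
    by (rule fps_nth_eq_1_if_one_minus_X_mult_eq_1
          [OF quadratic_fps_compose_X_mult_one_minus_X[OF catalan_fps_functional_equation]])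
  then have
    "real_of_int (\<Sum>i\<le>m. (-1) ^ (m - i) * int (catalan i) * int (i choose (m - i))) = 1"
    by (simp add: fps_nth_compose_X_mult_one_minus_X catalan_fps_def mult_ac)
  then show ?thesis
    by (simp only: of_int_eq_1_iff)
qed

lemma catalan_Suc_eq_alternating_sum:
  "int (catalan (Suc m))
    = (\<Sum>i\<le>m. (-1) ^ (m - i) * int (catalan i) * int (Suc i choose (Suc m - i)))"
proof -
  define a where "a k i = (-1) ^ (k - i) * int (catalan i) * int (i choose (k - i))" for k i
  have "(\<Sum>i\<le>Suc m. a (Suc m) i) - (\<Sum>i\<le>m. a m i) = 0"
    using catalan_alternating_sum_eq_1 unfolding a_def by simp
  moreover have
    "(\<Sum>i\<le>Suc m. a (Suc m) i) = int (catalan (Suc m)) + (\<Sum>i\<le>m. a (Suc m) i)"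
    by (simp add: a_def)
  moreover have "(\<Sum>i\<le>m. a (Suc m) i) - (\<Sum>i\<le>m. a m i)
      = - (\<Sum>i\<le>m. (-1) ^ (m - i) * int (catalan i) * int (Suc i choose (Suc m - i)))"
    unfolding sum_subtractf[symmetric] sum_negf[symmetric]
  proof (rule sum.cong[OF refl])
    fix i
    assume "i \<in> {..m}"
    then have "Suc m - i = Suc (m - i)"
      by auto
    then show "a (Suc m) i - a m i
        = - ((-1) ^ (m - i) * int (catalan i) * int (Suc i choose (Suc m - i)))"
      by (simp add: a_def algebra_simps)
  qed
  ultimately show ?thesis
    by linarith
qed

theorem theorem2:
  fixes n :: nat
  assumes "n > 1"
  shows "int (catalan n) =
    (\<Sum>j = 1..n. (-1) ^ (j - 1) * int (catalan (n - j)) * int ((n - j + 1) choose j))"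
proof -
  obtain m where n: "n = Suc m"
    using assms by (cases n) auto
  have "(\<Sum>j = 1..n. (-1) ^ (j - 1) * int (catalan (n - j)) * int ((n - j + 1) choose j))
      = (\<Sum>i\<le>m. (-1) ^ (m - i) * int (catalan i) * int (Suc i choose (Suc m - i)))"
    by (rule sum.reindex_bij_witness[where i="\<lambda>i. n - i" and j="\<lambda>j. n - j"])
      (auto simp: n Suc_diff_le)
  then show ?thesis
    using catalan_Suc_eq_alternating_sum[of m] n by simp
qed

end
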